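(* Let $F=F(N,\mathcal D)$ be a connected GSC. If there exists $k\ge3$ such that $\chi(\Gamma_k)=|\mathcal D|^{k-1}-1$ or $\chi(\Gamma_k)=|\mathcal D|^{k-1}$, then $F$ is fragile.
   Context: GSC: $N\ge2$, $\mathcal D\subset\{0,\dots,N-1\}^2$ with $1<|\mathcal D|<N^2$, $\varphi_i(x)=\frac1N(x+i)$, $F$ the attractor $F=\bigcup_{i\in\mathcal D}\varphi_i(F)$; $\varphi_{i_1\cdots i_k}=\varphi_{i_1}\circ\cdots\circ\varphi_{i_k}$. $\Gamma_k$: vertex set $\mathcal D^k$, edge between distinct $\mathbf i,\mathbf j$ iff $\varphi_{\mathbf i}(F)\cap\varphi_{\mathbf j}(F)\ne\varnothing$. $\chi(G)$: max over cut vertices $v$ of the number of vertices of the second largest component of $G-\{v\}$ (0 if none). $F$ is fragile if there is a partition $\mathcal D=\mathcal D_1\cup\mathcal D_2$ into disjoint nonempty sets with $\big(\bigcup_{i\in\mathcal D_1}\varphi_i(F)\big)\cap\big(\bigcup_{i\in\mathcal D_2}\varphi_i(F)\big)$ a singleton. *)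

theory Defs
  imports "HOL-Analysis.Analysis"
begin

text \<open>Digits i = (a,b) with a,b in {0..N-1}; points of the plane are real \<times> real.\<close>

definition gsc_map :: "nat \<Rightarrow> nat \<times> nat \<Rightarrow> real \<times> real \<Rightarrow> real \<times> real" where
  "gsc_map N i x = ((fst x + real (fst i)) / real N, (snd x + real (snd i)) / real N)"

definition gsc_word_map :: "nat \<Rightarrow> (nat \<times> nat) list \<Rightarrow> real \<times> real \<Rightarrow> real \<times> real" where
  "gsc_word_map N w = foldr (\<lambda>i f. gsc_map N i \<circ> f) w id"

definition gsc_attractor :: "nat \<Rightarrow> (nat \<times> nat) set \<Rightarrow> (real \<times> real) set" where
  "gsc_attractor N D = (THE K. compact K \<and> K \<noteq> {} \<and> K = (\<Union>i\<in>D. gsc_map N i ` K))"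

definition gamma_vertices :: "(nat \<times> nat) set \<Rightarrow> nat \<Rightarrow> (nat \<times> nat) list set" where
  "gamma_vertices D k = {w. set w \<subseteq> D \<and> length w = k}"

definition gamma_edge :: "nat \<Rightarrow> (nat \<times> nat) set \<Rightarrow> (nat \<times> nat) list \<Rightarrow> (nat \<times> nat) list \<Rightarrow> bool" where
  "gamma_edge N D v w \<longleftrightarrow> v \<noteq> w \<and>
     gsc_word_map N v ` gsc_attractor N D \<inter> gsc_word_map N w ` gsc_attractor N D \<noteq> {}"

text \<open>A graph is a vertex set V with an edge relation E (only edges inside V count).\<close>
definition greach :: "'a set \<Rightarrow> ('a \<Rightarrow> 'a \<Rightarrow> bool) \<Rightarrow> 'a \<Rightarrow> 'a \<Rightarrow> bool" where
  "greach V E = (\<lambda>a b. a \<in> V \<and> b \<in> V \<and> E a b)\<^sup>*\<^sup>*"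

definition gcomponents :: "'a set \<Rightarrow> ('a \<Rightarrow> 'a \<Rightarrow> bool) \<Rightarrow> 'a set set" where
  "gcomponents V E = {{y \<in> V. greach V E x y} | x. x \<in> V}"

definition cut_vertex :: "'a set \<Rightarrow> ('a \<Rightarrow> 'a \<Rightarrow> bool) \<Rightarrow> 'a \<Rightarrow> bool" where
  "cut_vertex V E v \<longleftrightarrow> v \<in> V \<and> card (gcomponents (V - {v}) E) > card (gcomponents V E)"

text \<open>Number of vertices of the second largest member of a family of (finite) components,
  counted with multiplicity (0 if there are fewer than two components).\<close>
definition second_largest_size :: "'a set set \<Rightarrow> nat" where
  "second_largest_size S = Max ({card C | C. C \<in> S \<and> (\<exists>C'\<in>S. C' \<noteq> C \<and> card C \<le> card C')} \<union> {0})"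

definition chi :: "'a set \<Rightarrow> ('a \<Rightarrow> 'a \<Rightarrow> bool) \<Rightarrow> nat" where
  "chi V E = Max ({second_largest_size (gcomponents (V - {v}) E) | v. cut_vertex V E v} \<union> {0})"

definition fragile :: "nat \<Rightarrow> (nat \<times> nat) set \<Rightarrow> bool" where
  "fragile N D \<longleftrightarrow> (\<exists>D1 D2. D1 \<union> D2 = D \<and> D1 \<inter> D2 = {} \<and> D1 \<noteq> {} \<and> D2 \<noteq> {} \<and>
     (\<exists>p. (\<Union>i\<in>D1. gsc_map N i ` gsc_attractor N D) \<inter> (\<Union>i\<in>D2. gsc_map N i ` gsc_attractor N D) = {p}))"

end

theory Submission
  imports Defs
begin

(*
  Let v = i0 u be a cut vertex of Gamma_k such that Gamma_k - v has a component C with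
  |D|^(k-1) - 1 or |D|^(k-1) vertices. As F is connected, so is every Gamma_n; hence each
  block j D^(k-1) with j ~= i0 stays connected in Gamma_k - v, and comparing sizes, C is
  either the punctured block i0 D^(k-1) - {v} or a full block b D^(k-1). In both cases a
  first-level piece phi_a(F) meets the pieces phi_j(F), j in some set R, only inside the
  single level-k cell phi_v(F).
  A meeting point phi_a(y) = phi_j(z) means that z = y - (j - a) is an integer translate of
  y inside F. Reading the first two digits u1 u2 of u coordinatewise, either y is a point
  determined by u1 u2, or u1 = u2 and y = phi_u1(y') with y' of the same kind; since phi_u1
  then contracts towards that point, y is that point in any case. So for a suitable digit b
  the two parts of the partition {b}, D - {b} meet in at most one point, and in at least one
  since F is connected.
*)

lemma closure_UN_finite:
  "finite I \<Longrightarrow> closure (\<Union>i\<in>I. A i) = (\<Union>i\<in>I. closure (A i))"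
  by (induction I rule: finite_induct) auto

lemma image_closure_eq_closure_image:
  fixes f :: "'a::topological_space \<Rightarrow> 'b::t2_space"
  assumes "compact (closure S)" "continuous_on (closure S) f"
  shows "f ` closure S = closure (f ` S)"
proof
  show "f ` closure S \<subseteq> closure (f ` S)"
    using assms(2) by (rule continuous_image_closure_subset) simp
  have "closed (f ` closure S)"
    by (rule compact_imp_closed[OF compact_continuous_image[OF assms(2,1)]])
  then show "closure (f ` S) \<subseteq> f ` closure S"
    by (intro closure_minimal) (auto intro: closure_subset[THEN subsetD])
qed

lemma connected_closed_cover_meets:
  assumes "connected S" "closed A" "closed B" "S \<subseteq> A \<union> B" "A \<inter> S \<noteq> {}" "B \<inter> S \<noteq> {}"
  shows "A \<inter> B \<inter> S \<noteq> {}"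
  using assms unfolding connected_closed by blast

abbreviation unit_square :: "(real \<times> real) set" where
  "unit_square \<equiv> {0..1} \<times> {0..1}"

definition gsc_fix :: "nat \<Rightarrow> nat \<times> nat \<Rightarrow> real \<times> real" where
  "gsc_fix N d = (real (fst d) / (real N - 1), real (snd d) / (real N - 1))"

lemma gsc_map_eq_scaleR: "gsc_map N i x = (1 / real N) *\<^sub>R (x + (real (fst i), real (snd i)))"
  by (cases x) (simp add: gsc_map_def divide_inverse mult.commute)

lemma gsc_word_map_Nil [simp]: "gsc_word_map N [] = id"
  by (simp add: gsc_word_map_def)

lemma gsc_word_map_Cons [simp]: "gsc_word_map N (i # w) = gsc_map N i \<circ> gsc_word_map N w"
  by (simp add: gsc_word_map_def)

lemma gsc_word_map_append: "gsc_word_map N (v @ w) = gsc_word_map N v \<circ> gsc_word_map N w"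
  by (induction v) (auto simp: comp_assoc)

lemma dist_gsc_map: "N > 0 \<Longrightarrow> dist (gsc_map N i a) (gsc_map N i b) = dist a b / real N"
  by (simp add: gsc_map_eq_scaleR dist_norm flip: scaleR_diff_right)

lemma dist_gsc_word_map:
  "N > 0 \<Longrightarrow> dist (gsc_word_map N w a) (gsc_word_map N w b) = dist a b / real N ^ length w"
  by (induction w) (auto simp: dist_gsc_map)

lemma continuous_on_gsc_map: "continuous_on S (gsc_map N i)"
  unfolding gsc_map_eq_scaleR by (intro continuous_intros)

lemma continuous_on_gsc_word_map: "continuous_on S (gsc_word_map N w)"
  by (induction w) (auto intro: continuous_on_compose2[OF continuous_on_gsc_map])

lemma gsc_map_fix: "N \<ge> 2 \<Longrightarrow> gsc_map N d (gsc_fix N d) = gsc_fix N d"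
  by (simp add: gsc_map_def gsc_fix_def field_simps)

lemma gsc_map_unit_square:
  assumes "i \<in> {0..<N} \<times> {0..<N}" "x \<in> unit_square"
  shows "gsc_map N i x \<in> unit_square"
proof -
  have "real (fst i) + 1 \<le> real N" "real (snd i) + 1 \<le> real N"
    using assms(1) by auto
  with assms(2) show ?thesis
    by (cases x) (auto simp: gsc_map_def divide_simps)
qed

lemma gsc_word_map_unit_square:
  "set w \<subseteq> {0..<N} \<times> {0..<N} \<Longrightarrow> x \<in> unit_square \<Longrightarrow> gsc_word_map N w x \<in> unit_square"
  by (induction w) (auto intro: gsc_map_unit_square simp del: atLeastAtMost_iff)

lemma gsc_fix_unit_square: "N \<ge> 2 \<Longrightarrow> d \<in> {0..<N} \<times> {0..<N} \<Longrightarrow> gsc_fix N d \<in> unit_square"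
  by (auto simp: gsc_fix_def field_simps)

lemma dist_unit_square_le: "a \<in> unit_square \<Longrightarrow> b \<in> unit_square \<Longrightarrow> dist a b \<le> 2"
proof -
  assume "a \<in> unit_square" "b \<in> unit_square"
  then have "\<bar>fst a - fst b\<bar> + \<bar>snd a - snd b\<bar> \<le> 2"
    by (auto simp: mem_Times_iff abs_le_iff)
  moreover have "dist a b \<le> \<bar>fst a - fst b\<bar> + \<bar>snd a - snd b\<bar>"
    using sqrt_sum_squares_le_sum_abs[of "fst a - fst b" "snd a - snd b"]
    by (cases a, cases b) (simp add: dist_Pair_Pair dist_real_def)
  ultimately show ?thesis by linarith
qed

(* Used through self_similar_image_subset and self_similar_mem_image only: as a rewrite rule
   the defining equation loops. *)
definition self_similar :: "nat \<Rightarrow> (nat \<times> nat) set \<Rightarrow> (real \<times> real) set \<Rightarrow> bool" where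
  "self_similar N D K \<longleftrightarrow> K = (\<Union>i\<in>D. gsc_map N i ` K)"

lemma self_similar_image_subset: "self_similar N D K \<Longrightarrow> i \<in> D \<Longrightarrow> gsc_map N i ` K \<subseteq> K"
  unfolding self_similar_def by blast

lemma self_similar_mem_image:
  assumes "self_similar N D K" "y \<in> K"
  obtains i z where "i \<in> D" "z \<in> K" "y = gsc_map N i z"
proof -
  have "K \<subseteq> (\<Union>i\<in>D. gsc_map N i ` K)"
    using assms(1) unfolding self_similar_def by (rule equalityD1)
  with assms(2) that show ?thesis by blast
qed

lemma self_similar_word_map_mem:
  assumes "self_similar N D K" "set w \<subseteq> D" "y \<in> K"
  shows "gsc_word_map N w y \<in> K"
  using assms(2,3) by (induction w) (use self_similar_image_subset[OF assms(1)] in auto)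

lemma self_similar_word_map_cover:
  assumes "self_similar N D K" "x \<in> K"
  obtains w y where "set w \<subseteq> D" "length w = n" "y \<in> K" "x = gsc_word_map N w y"
proof -
  have "\<exists>w y. set w \<subseteq> D \<and> length w = n \<and> y \<in> K \<and> x = gsc_word_map N w y"
  proof (induction n)
    case 0
    then show ?case using assms(2) by (intro exI[of _ "[]"] exI[of _ x]) auto
  next
    case (Suc n)
    then obtain w y where w: "set w \<subseteq> D" "length w = n" "y \<in> K" "x = gsc_word_map N w y"
      by blast
    from assms(1) \<open>y \<in> K\<close> obtain i z where "i \<in> D" "z \<in> K" "y = gsc_map N i z"
      by (rule self_similar_mem_image)
    with w show ?case
      by (intro exI[of _ "w @ [i]"] exI[of _ z]) (auto simp: gsc_word_map_append)
  qed
  with that show ?thesis by blast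
qed

lemma gcomponent_subset: "C \<in> gcomponents V E \<Longrightarrow> C \<subseteq> V"
  unfolding gcomponents_def by blast

lemma gcomponent_greach_closed:
  assumes "C \<in> gcomponents V E" "y \<in> C" "greach V E y z"
  shows "z \<in> C"
proof -
  obtain x where x: "x \<in> V" "C = {y \<in> V. greach V E x y}"
    using assms(1) unfolding gcomponents_def by blast
  have "greach V E x z"
    using assms(2,3) x unfolding greach_def by auto
  moreover have "z \<in> V"
    using assms(3) x(2) assms(2) unfolding greach_def
    by (induction rule: rtranclp_induct) auto
  ultimately show ?thesis using x(2) by blast
qed

lemma gcomponent_edge_closed:
  assumes "C \<in> gcomponents V E" "y \<in> C" "z \<in> V" "E y z"
  shows "z \<in> C"
proof -
  have "y \<in> V" using gcomponent_subset[OF assms(1)] assms(2) by blast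
  with assms(3,4) have "greach V E y z"
    unfolding greach_def by (simp add: r_into_rtranclp)
  with assms(1,2) show ?thesis by (rule gcomponent_greach_closed)
qed

lemma greach_map:
  assumes "greach V E a b"
    and "\<And>x. x \<in> V \<Longrightarrow> f x \<in> V'"
    and "\<And>x y. x \<in> V \<Longrightarrow> y \<in> V \<Longrightarrow> E x y \<Longrightarrow> E' (f x) (f y)"
  shows "greach V' E' (f a) (f b)"
  using assms(1) unfolding greach_def
proof (induction rule: rtranclp_induct)
  case (step y z)
  then show ?case using assms(2,3) by (auto intro: rtranclp.rtrancl_into_rtrancl)
qed simp

lemma finite_gcomponents:
  assumes "finite V" shows "finite (gcomponents V E)"
proof -
  have "gcomponents V E \<subseteq> Pow V"
    using gcomponent_subset by blast
  then show ?thesis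
    using assms by (simp add: finite_subset)
qed

lemma second_largest_size_attained:
  assumes "finite S" "second_largest_size S \<noteq> 0"
  obtains C where "C \<in> S" "card C = second_largest_size S"
proof -
  let ?sizes = "{card C | C. C \<in> S \<and> (\<exists>C'\<in>S. C' \<noteq> C \<and> card C \<le> card C')}"
  have sizes: "?sizes \<subseteq> card ` S"
    by blast
  then have "finite ?sizes"
    by (rule finite_surj[OF assms(1)])
  then have "second_largest_size S \<in> ?sizes \<union> {0}"
    unfolding second_largest_size_def by (intro Max_in) auto
  with assms(2) have "second_largest_size S \<in> ?sizes"
    by simp
  then have "second_largest_size S \<in> card ` S"
    by (rule subsetD[OF sizes])
  then show ?thesis
    using that by (metis imageE)
qed

lemma chi_attained:
  assumes "finite V" "chi V E \<noteq> 0"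
  obtains v where "cut_vertex V E v" "chi V E = second_largest_size (gcomponents (V - {v}) E)"
proof -
  let ?chis = "{second_largest_size (gcomponents (V - {v}) E) | v. cut_vertex V E v}"
  have "?chis \<subseteq> (\<lambda>v. second_largest_size (gcomponents (V - {v}) E)) ` V"
    unfolding cut_vertex_def by blast
  then have "finite ?chis"
    by (rule finite_surj[OF assms(1)])
  then have "chi V E \<in> ?chis \<union> {0}"
    unfolding chi_def by (intro Max_in) auto
  with assms(2) have "chi V E \<in> ?chis"
    by simp
  then show ?thesis
    using that by blast
qed

lemma obtain_gcomponent_card_chi:
  assumes "finite V" "chi V E \<noteq> 0"
  obtains v C where "v \<in> V" "C \<in> gcomponents (V - {v}) E" "card C = chi V E"
proof -
  obtain v where v: "cut_vertex V E v" "chi V E = second_largest_size (gcomponents (V - {v}) E)"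
    using chi_attained[OF assms] .
  have "finite (gcomponents (V - {v}) E)"
    using assms(1) by (simp add: finite_gcomponents)
  then obtain C where "C \<in> gcomponents (V - {v}) E" "card C = chi V E"
    using second_largest_size_attained v(2) assms(2) by metis
  moreover have "v \<in> V"
    using v(1) unfolding cut_vertex_def by blast
  ultimately show ?thesis using that by blast
qed

lemma finite_gamma_vertices: "finite D \<Longrightarrow> finite (gamma_vertices D n)"
  unfolding gamma_vertices_def by (rule finite_lists_length_eq)

lemma card_gamma_vertices: "finite D \<Longrightarrow> card (gamma_vertices D n) = card D ^ n"
  unfolding gamma_vertices_def by (rule card_lists_length_eq)

lemma Cons_mem_gamma_vertices_iff [simp]:
  "i # w \<in> gamma_vertices D (Suc n) \<longleftrightarrow> i \<in> D \<and> w \<in> gamma_vertices D n"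
  by (auto simp: gamma_vertices_def)

lemma gamma_vertices_Suc: "gamma_vertices D (Suc n) = (\<Union>i\<in>D. Cons i ` gamma_vertices D n)"
  by (auto simp: gamma_vertices_def length_Suc_conv)

lemma card_Cons_image_gamma_vertices:
  "finite D \<Longrightarrow> card (Cons i ` gamma_vertices D n) = card D ^ n"
  by (simp add: card_image card_gamma_vertices)

section \<open>Contact coordinates\<close>

(* (y' + a1) / N for the point y' of the edge 0 or 1 of the unit interval allowed by the digit a2;
   if a1 = a2, the fixed point of x \<mapsto> (x + a1) / N instead (the two agree when both apply). *)
definition contact_coord :: "nat \<Rightarrow> nat \<Rightarrow> nat \<Rightarrow> real" where
  "contact_coord N a1 a2 =
     (if a1 = a2 then real a1 / (real N - 1)
      else if a2 = N - 1 then (real a1 + 1) / real N else real a1 / real N)"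

definition contact_point :: "nat \<Rightarrow> nat \<times> nat \<Rightarrow> nat \<times> nat \<Rightarrow> real \<times> real" where
  "contact_point N u1 u2 = (contact_coord N (fst u1) (fst u2), contact_coord N (snd u1) (snd u2))"

lemma contact_point_same: "contact_point N u u = gsc_fix N u"
  by (simp add: contact_point_def contact_coord_def gsc_fix_def)

lemma contact_coord_bounds: "N \<ge> 2 \<Longrightarrow> a1 < N \<Longrightarrow> 0 \<le> contact_coord N a1 a2 \<and> contact_coord N a1 a2 \<le> 1"
  unfolding contact_coord_def by (auto simp: field_simps)

lemma contact_point_unit_square:
  "N \<ge> 2 \<Longrightarrow> u1 \<in> {0..<N} \<times> {0..<N} \<Longrightarrow> contact_point N u1 u2 \<in> unit_square"
  unfolding contact_point_def using contact_coord_bounds by (auto simp: mem_Times_iff)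

lemma digit_scaled_bounds:
  assumes "N > 0" "a < N" "0 \<le> s" "s \<le> 1"
  shows "0 \<le> (s + real a) / real N" "(s + real a) / real N \<le> 1"
proof -
  have "real a + 1 \<le> real N"
    using assms(2) by (metis Suc_leI add.commute of_nat_Suc of_nat_le_iff)
  with assms show "0 \<le> (s + real a) / real N" "(s + real a) / real N \<le> 1"
    by simp_all
qed

lemma digit_scaled_eq_1:
  assumes "N > 0" "s \<le> 1" "a < N" "(s + real a) / real N = 1"
  shows "s = 1 \<and> a = N - 1"
proof -
  have sum: "s + real a = real N"
    using assms(1,4) by (simp add: field_simps)
  with assms(2) have "real N \<le> real (a + 1)" by simp
  then have "a = N - 1" using assms(3) by linarith
  with sum assms(1) show ?thesis by (simp add: of_nat_diff)
qed

lemma digit_scaled_eq_0: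
  assumes "N > 0" "0 \<le> s" "(s + real a) / real N = 0"
  shows "s = 0 \<and> a = 0"
  using assms by (simp add: field_simps)

lemma unit_interval_diff_int:
  fixes x z :: real
  assumes "0 \<le> x" "x \<le> 1" "0 \<le> z" "z \<le> 1" "x - z = of_int e" "e \<noteq> 0"
  shows "(e = 1 \<and> x = 1 \<and> z = 0) \<or> (e = -1 \<and> x = 0 \<and> z = 1)"
proof -
  have "-1 \<le> e" "e \<le> 1"
    using assms(1-5) by (linarith, linarith)
  with assms(6) have "e = 1 \<or> e = -1" by linarith
  then show ?thesis
  proof
    assume "e = 1"
    with assms(1-5) show ?thesis by simp
  next
    assume "e = -1"
    with assms(1-5) show ?thesis by simp
  qed
qed

lemma contact_coord_eq_if_edge:
  assumes N: "N \<ge> 2" and t: "0 \<le> t" "t \<le> 1" and a2: "a2 < N"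
    and y': "y' = (t + real a2) / real N" and edge: "y' = 0 \<or> y' = 1"
  shows "(y' + real a1) / real N = contact_coord N a1 a2"
  using edge
proof
  assume "y' = 0"
  then have "(t + real a2) / real N = 0" using y' by simp
  from digit_scaled_eq_0[OF _ t(1) this] N have "a2 = 0" by simp
  with \<open>y' = 0\<close> N show ?thesis by (auto simp: contact_coord_def)
next
  assume "y' = 1"
  then have "(t + real a2) / real N = 1" using y' by simp
  from digit_scaled_eq_1[OF _ t(2) a2 this] N have "a2 = N - 1" by simp
  moreover have "real (N - 1) = real N - 1" and "real N - 1 \<noteq> 0"
    using N by (simp_all add: of_nat_diff)
  ultimately show ?thesis
    using \<open>y' = 1\<close> by (auto simp: contact_coord_def add.commute)
qed

lemma digit_carry:
  fixes c :: int
  assumes N0: "N > 0" and digits: "a < N" "b < N"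
    and y': "0 \<le> y'" "y' \<le> 1" and z: "0 \<le> z" "z \<le> 1"
    and shift: "(y' + real a) / real N - (z + real b) / real N = of_int c" and c: "c \<noteq> 0"
  shows "int b + int N * c - int a = c"
proof -
  have "0 \<le> (y' + real a) / real N" "(y' + real a) / real N \<le> 1"
    and "0 \<le> (z + real b) / real N" "(z + real b) / real N \<le> 1"
    using digit_scaled_bounds[OF N0 digits(1) y'] digit_scaled_bounds[OF N0 digits(2) z] by simp_all
  from unit_interval_diff_int[OF this shift c] show ?thesis
  proof
    assume c: "c = 1 \<and> (y' + real a) / real N = 1 \<and> (z + real b) / real N = 0"
    then have "a = N - 1" "b = 0"
      using digit_scaled_eq_1[OF N0 y'(2) digits(1)] digit_scaled_eq_0[OF N0 z(1)] by blast+
    with c N0 show ?thesis by simp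
  next
    assume c: "c = -1 \<and> (y' + real a) / real N = 0 \<and> (z + real b) / real N = 1"
    then have "a = 0" "b = N - 1"
      using digit_scaled_eq_0[OF N0 y'(1)] digit_scaled_eq_1[OF N0 z(2) digits(2)] by blast+
    with c N0 show ?thesis by simp
  qed
qed

lemma contact_coord_shift:
  fixes c :: int
  assumes N: "N \<ge> 2" and digits: "a1 < N" "a2 < N" "b < N"
    and t: "0 \<le> t" "t \<le> 1" and z: "0 \<le> z" "z \<le> 1"
    and y: "y = ((t + real a2) / real N + real a1) / real N"
    and shift: "y - of_int c = (z + real b) / real N"
  defines "e \<equiv> int b + int N * c - int a1"
  shows "(t + real a2) / real N - z = of_int e"
    and "c \<noteq> 0 \<Longrightarrow> e = c"
    and "e \<noteq> 0 \<Longrightarrow> y = contact_coord N a1 a2"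
proof -
  define y' where "y' = (t + real a2) / real N"
  have y_eq: "y = (y' + real a1) / real N"
    unfolding y y'_def ..
  have N0: "N > 0" using N by simp
  have y'_bounds: "0 \<le> y'" "y' \<le> 1"
    unfolding y'_def using digit_scaled_bounds[OF N0 digits(2) t] by simp_all
  have "real N * y = y' + real a1"
    using N0 unfolding y y'_def[symmetric] by simp
  moreover have "real N * (y - of_int c) = z + real b"
    using N0 unfolding shift by simp
  ultimately show diff: "y' - z = of_int e"
    unfolding e_def by (simp add: algebra_simps)
  show "y = contact_coord N a1 a2" if "e \<noteq> 0"
  proof -
    have "y' = 0 \<or> y' = 1"
      using unit_interval_diff_int[OF y'_bounds z diff that] by blast
    with contact_coord_eq_if_edge[OF N t digits(2) y'_def] show ?thesis
      unfolding y y'_def by blast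
  qed
  have "(y' + real a1) / real N - (z + real b) / real N = of_int c"
    using shift unfolding y_eq by simp
  from digit_carry[OF N0 digits(1,3) y'_bounds z this] show "e = c" if "c \<noteq> 0"
    using that unfolding e_def .
qed

definition of_int_pair :: "int \<times> int \<Rightarrow> real \<times> real" where
  "of_int_pair e = (of_int (fst e), of_int (snd e))"

definition digit_shift :: "nat \<times> nat \<Rightarrow> nat \<times> nat \<Rightarrow> int \<times> int" where
  "digit_shift a j = (int (fst j) - int (fst a), int (snd j) - int (snd a))"

lemma digit_shift_eq_0_iff: "digit_shift a j = (0, 0) \<longleftrightarrow> j = a"
  by (auto simp: digit_shift_def prod_eq_iff)

lemma gsc_map_eq_iff_shift:
  assumes "N > 0"
  shows "gsc_map N a y = gsc_map N j z \<longleftrightarrow> z = y - of_int_pair (digit_shift a j)"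
  using assms unfolding gsc_map_def of_int_pair_def digit_shift_def
  by (cases y, cases z) (auto simp: field_simps)

lemma gsc_map_mem_image_iff_shift:
  assumes "N > 0"
  shows "gsc_map N a y \<in> gsc_map N j ` K \<longleftrightarrow> y - of_int_pair (digit_shift a j) \<in> K"
  using gsc_map_eq_iff_shift[OF assms] by (auto simp: image_iff)

lemma contact_point_shift:
  assumes N: "N \<ge> 2"
    and digits: "u1 \<in> {0..<N} \<times> {0..<N}" "u2 \<in> {0..<N} \<times> {0..<N}" "b \<in> {0..<N} \<times> {0..<N}"
    and tz: "t \<in> unit_square" "z \<in> unit_square" and e: "e \<noteq> (0, 0)"
    and shift: "gsc_map N u1 (gsc_map N u2 t) - of_int_pair e = gsc_map N b z"
  obtains e' where "gsc_map N u2 t - z = of_int_pair e'"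
    and "e' \<noteq> e \<Longrightarrow> gsc_map N u1 (gsc_map N u2 t) = contact_point N u1 u2"
proof -
  let ?y = "gsc_map N u1 (gsc_map N u2 t)" and ?y' = "gsc_map N u2 t"
  define e' where "e' = (int (fst b) + int N * fst e - int (fst u1),
                         int (snd b) + int N * snd e - int (snd u1))"
  have lt: "fst u1 < N" "snd u1 < N" "fst u2 < N" "snd u2 < N" "fst b < N" "snd b < N"
    using digits by auto
  have t: "0 \<le> fst t" "fst t \<le> 1" "0 \<le> snd t" "snd t \<le> 1"
    and z: "0 \<le> fst z" "fst z \<le> 1" "0 \<le> snd z" "snd z \<le> 1"
    using tz by (auto simp: mem_Times_iff)
  have coords:
    "fst ?y = ((fst t + real (fst u2)) / real N + real (fst u1)) / real N"
    "snd ?y = ((snd t + real (snd u2)) / real N + real (snd u1)) / real N"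
    "fst ?y - of_int (fst e) = (fst z + real (fst b)) / real N"
    "snd ?y - of_int (snd e) = (snd z + real (snd b)) / real N"
    "fst ?y' = (fst t + real (fst u2)) / real N"
    "snd ?y' = (snd t + real (snd u2)) / real N"
    "fst e' = int (fst b) + int N * fst e - int (fst u1)"
    "snd e' = int (snd b) + int N * snd e - int (snd u1)"
    using arg_cong[OF shift, of fst] arg_cong[OF shift, of snd]
    by (simp_all add: gsc_map_def of_int_pair_def e'_def)
  note cx = contact_coord_shift[OF N lt(1,3,5) t(1,2) z(1,2) coords(1,3), folded coords(5,7)]
  note cy = contact_coord_shift[OF N lt(2,4,6) t(3,4) z(3,4) coords(2,4), folded coords(6,8)]
  show ?thesis
  proof
    show "?y' - z = of_int_pair e'"
      using cx(1) cy(1) by (simp add: of_int_pair_def prod_eq_iff)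
    assume "e' \<noteq> e"
    with e cx(2) cy(2) have "fst e' \<noteq> 0" "snd e' \<noteq> 0"
      by (metis prod.collapse)+
    then show "?y = contact_point N u1 u2"
      using cx(3) cy(3) unfolding contact_point_def by (simp add: prod_eq_iff)
  qed
qed

section \<open>The attractor\<close>

locale gsc_carpet =
  fixes N :: nat and D :: "(nat \<times> nat) set"
  assumes N_ge_2: "N \<ge> 2" and digits: "D \<subseteq> {0..<N} \<times> {0..<N}" and D_ne: "D \<noteq> {}"
begin

abbreviation F :: "(real \<times> real) set" where
  "F \<equiv> gsc_attractor N D"

abbreviation cell :: "(nat \<times> nat) list \<Rightarrow> (real \<times> real) set" where
  "cell w \<equiv> gsc_word_map N w ` F"

lemma finite_D: "finite D"
  using digits finite_subset by blast

lemma N_pos: "N > 0" and real_N_gt_1: "real N > 1"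
  using N_ge_2 by auto

lemma ex_div_power_less:
  assumes "e > 0" shows "\<exists>n. c / real N ^ n < e"
proof -
  obtain n where "c / e < real N ^ n"
    using real_arch_pow[OF real_N_gt_1] by blast
  moreover have "real N ^ n > 0"
    using real_N_gt_1 by simp
  ultimately have "c / real N ^ n < e"
    using assms by (simp add: pos_divide_less_eq divide_less_eq mult.commute)
  then show ?thesis ..
qed

definition orbit :: "nat \<times> nat \<Rightarrow> (real \<times> real) set" where
  "orbit d = {gsc_word_map N w (gsc_fix N d) | w. set w \<subseteq> D}"

lemma gsc_fix_mem_orbit: "gsc_fix N d \<in> orbit d"
  unfolding orbit_def by (force intro: exI[of _ "[]"])

lemma gsc_fix_mem_self_similar:
  assumes K: "compact K" "K \<noteq> {}" "self_similar N D K" and d: "d \<in> D"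
  shows "gsc_fix N d \<in> K"
proof -
  let ?p = "gsc_fix N d"
  obtain x where x: "x \<in> K" using K(2) by blast
  have "?p \<in> closure K"
    unfolding closure_approachable
  proof (intro allI impI)
    fix e :: real assume "e > 0"
    then obtain n where n: "dist x ?p / real N ^ n < e"
      using ex_div_power_less by blast
    have "gsc_word_map N (replicate n d) ?p = ?p"
      by (induction n) (simp_all add: gsc_map_fix[OF N_ge_2])
    with n have "dist (gsc_word_map N (replicate n d) x) ?p < e"
      using dist_gsc_word_map[OF N_pos, of "replicate n d" x ?p] by simp
    moreover have "set (replicate n d) \<subseteq> D"
      using d by (induction n) auto
    then have "gsc_word_map N (replicate n d) x \<in> K"
      using self_similar_word_map_mem[OF K(3) _ x] by blast
    ultimately show "\<exists>y\<in>K. dist y ?p < e" by blast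
  qed
  with K(1) show ?thesis by (simp add: compact_imp_closed closure_closed)
qed

lemma self_similar_subset_closure_orbit:
  assumes K: "compact K" "self_similar N D K"
  shows "K \<subseteq> closure (orbit d)"
proof
  let ?p = "gsc_fix N d"
  obtain B where B: "\<forall>y\<in>K. dist ?p y \<le> B"
    using compact_imp_bounded[OF K(1)] unfolding bounded_any_center[of _ ?p] by blast
  fix x assume "x \<in> K"
  show "x \<in> closure (orbit d)"
    unfolding closure_approachable
  proof (intro allI impI)
    fix e :: real assume "e > 0"
    then obtain n where n: "B / real N ^ n < e"
      using ex_div_power_less by blast
    obtain w y where w: "set w \<subseteq> D" "length w = n" "y \<in> K" "x = gsc_word_map N w y"
      by (rule self_similar_word_map_cover[OF K(2) \<open>x \<in> K\<close>])
    have "dist (gsc_word_map N w ?p) x = dist ?p y / real N ^ n"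
      using dist_gsc_word_map[OF N_pos, of w ?p y] w by simp
    also have "\<dots> \<le> B / real N ^ n"
      using B w(3) by (intro divide_right_mono) auto
    finally have "dist (gsc_word_map N w ?p) x < e"
      using n by linarith
    moreover have "gsc_word_map N w ?p \<in> orbit d"
      using w(1) unfolding orbit_def by blast
    ultimately show "\<exists>y\<in>orbit d. dist y x < e" by blast
  qed
qed

lemma self_similar_eq_closure_orbit:
  assumes K: "compact K" "K \<noteq> {}" "self_similar N D K" and d: "d \<in> D"
  shows "K = closure (orbit d)"
proof
  have "orbit d \<subseteq> K"
    using self_similar_word_map_mem[OF K(3) _ gsc_fix_mem_self_similar[OF K d]]
    unfolding orbit_def by blast
  with K(1) show "closure (orbit d) \<subseteq> K"
    by (intro closure_minimal) (auto simp: compact_imp_closed)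
qed (rule self_similar_subset_closure_orbit[OF K(1,3)])

lemma self_similar_orbit:
  assumes d: "d \<in> D"
  shows "self_similar N D (orbit d)"
  unfolding self_similar_def
proof
  show "orbit d \<subseteq> (\<Union>i\<in>D. gsc_map N i ` orbit d)"
  proof
    fix x assume "x \<in> orbit d"
    then obtain w where w: "set w \<subseteq> D" "x = gsc_word_map N w (gsc_fix N d)"
      unfolding orbit_def by blast
    show "x \<in> (\<Union>i\<in>D. gsc_map N i ` orbit d)"
    proof (cases w)
      case Nil
      then have "x = gsc_map N d (gsc_fix N d)"
        using w(2) gsc_map_fix[OF N_ge_2] by simp
      then have "x \<in> gsc_map N d ` orbit d"
        using gsc_fix_mem_orbit by blast
      with d show ?thesis by blast
    next
      case (Cons i w')
      with w have "i \<in> D" "set w' \<subseteq> D" "x = gsc_map N i (gsc_word_map N w' (gsc_fix N d))"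
        by auto
      then have "x \<in> gsc_map N i ` orbit d"
        unfolding orbit_def by blast
      with \<open>i \<in> D\<close> show ?thesis by blast
    qed
  qed
  have "gsc_map N i x \<in> orbit d" if "i \<in> D" "x \<in> orbit d" for i x
  proof -
    from that obtain w where "set (i # w) \<subseteq> D" "x = gsc_word_map N w (gsc_fix N d)"
      unfolding orbit_def by auto
    then have "gsc_word_map N (i # w) (gsc_fix N d) \<in> orbit d"
      unfolding orbit_def by blast
    then show "gsc_map N i x \<in> orbit d"
      by (simp add: \<open>x = _\<close>)
  qed
  then show "(\<Union>i\<in>D. gsc_map N i ` orbit d) \<subseteq> orbit d"
    by blast
qed

lemma closure_orbit_subset_unit_square:
  assumes "d \<in> D"
  shows "closure (orbit d) \<subseteq> unit_square"
proof (rule closure_minimal)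
  have p: "gsc_fix N d \<in> unit_square"
    using gsc_fix_unit_square[OF N_ge_2] assms digits by blast
  show "orbit d \<subseteq> unit_square"
  proof
    fix x assume "x \<in> orbit d"
    then obtain w where "set w \<subseteq> D" "x = gsc_word_map N w (gsc_fix N d)"
      unfolding orbit_def by blast
    with digits p show "x \<in> unit_square"
      using gsc_word_map_unit_square[of w N] by auto
  qed
qed (intro closed_Times closed_atLeastAtMost)

lemma compact_closure_orbit:
  assumes "d \<in> D" shows "compact (closure (orbit d))"
proof -
  have "compact (unit_square \<inter> closure (orbit d))"
    by (intro compact_Int_closed compact_Times compact_Icc closed_closure)
  then show ?thesis
    using closure_orbit_subset_unit_square[OF assms] by (simp add: Int_absorb1)
qed

lemma self_similar_closure_orbit:
  assumes d: "d \<in> D"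
  shows "self_similar N D (closure (orbit d))"
proof -
  have "closure (orbit d) = closure (\<Union>i\<in>D. gsc_map N i ` orbit d)"
    using self_similar_orbit[OF d] unfolding self_similar_def by simp
  also have "\<dots> = (\<Union>i\<in>D. closure (gsc_map N i ` orbit d))"
    using closure_UN_finite[OF finite_D] .
  also have "\<dots> = (\<Union>i\<in>D. gsc_map N i ` closure (orbit d))"
    using image_closure_eq_closure_image[OF compact_closure_orbit[OF d] continuous_on_gsc_map] by simp
  finally show ?thesis unfolding self_similar_def .
qed

lemma attractor_eq_closure_orbit:
  assumes d: "d \<in> D"
  shows "F = closure (orbit d)"
  unfolding gsc_attractor_def self_similar_def[symmetric]
proof (rule the_equality)
  show "compact (closure (orbit d)) \<and> closure (orbit d) \<noteq> {} \<and> self_similar N D (closure (orbit d))"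
    using compact_closure_orbit[OF d] self_similar_closure_orbit[OF d]
      closure_subset gsc_fix_mem_orbit by blast
qed (use self_similar_eq_closure_orbit[OF _ _ _ d] in blast)

lemma compact_attractor: "compact F"
  and attractor_ne: "F \<noteq> {}"
  and self_similar_attractor: "self_similar N D F"
  and attractor_unit_square: "F \<subseteq> unit_square"
proof -
  obtain d where d: "d \<in> D" using D_ne by blast
  show "compact F" "self_similar N D F" "F \<subseteq> unit_square"
    unfolding attractor_eq_closure_orbit[OF d]
    by (simp_all only: d compact_closure_orbit self_similar_closure_orbit closure_orbit_subset_unit_square)
  show "F \<noteq> {}"
    unfolding attractor_eq_closure_orbit[OF d]
    using closure_subset gsc_fix_mem_orbit by blast
qed

lemma gamma_edge_iff: "gamma_edge N D v w \<longleftrightarrow> v \<noteq> w \<and> cell v \<inter> cell w \<noteq> {}"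
  unfolding gamma_edge_def ..

lemma cell_Cons: "cell (i # w) = gsc_map N i ` cell w"
  by (simp add: image_comp)

lemma gamma_edge_Cons: "gamma_edge N D v w \<Longrightarrow> gamma_edge N D (i # v) (i # w)"
  unfolding gamma_edge_iff cell_Cons by blast

lemma cell_subset: "set w \<subseteq> D \<Longrightarrow> cell w \<subseteq> F"
  using self_similar_word_map_mem[OF self_similar_attractor] by blast

lemma closed_cell: "closed (cell w)"
  by (intro compact_imp_closed compact_continuous_image continuous_on_gsc_word_map compact_attractor)

lemma attractor_cover_cells:
  assumes "x \<in> F"
  obtains w y where "w \<in> gamma_vertices D n" "y \<in> F" "x = gsc_word_map N w y"
  using self_similar_word_map_cover[OF self_similar_attractor assms]
  unfolding gamma_vertices_def by blast

lemma cells_disjoint_if_gcomponent: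
  assumes "C \<in> gcomponents V (gamma_edge N D)" "v \<in> C" "w \<in> V - C"
  shows "cell v \<inter> cell w = {}"
proof (rule ccontr)
  assume "cell v \<inter> cell w \<noteq> {}"
  moreover have "v \<noteq> w" using assms by blast
  ultimately have "gamma_edge N D v w" unfolding gamma_edge_iff by blast
  then show False using gcomponent_edge_closed[OF assms(1,2)] assms(3) by blast
qed

lemma greach_gamma_if_connected:
  assumes conn: "connected F" and v: "v \<in> gamma_vertices D n" and w: "w \<in> gamma_vertices D n"
  shows "greach (gamma_vertices D n) (gamma_edge N D) v w"
proof (rule ccontr)
  assume not_reach: "\<not> ?thesis"
  let ?V = "gamma_vertices D n"
  define A where "A = {u \<in> ?V. greach ?V (gamma_edge N D) v u}"
  define S1 where "S1 = (\<Union>u\<in>A. cell u)"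
  define S2 where "S2 = (\<Union>u\<in>?V - A. cell u)"
  have A: "A \<in> gcomponents ?V (gamma_edge N D)"
    using v unfolding A_def gcomponents_def by blast
  have "v \<in> A" "w \<in> ?V - A"
    using v w not_reach unfolding A_def greach_def by simp_all
  have cell_F: "cell u \<subseteq> F" "cell u \<noteq> {}" if "u \<in> ?V" for u
    using that cell_subset attractor_ne unfolding gamma_vertices_def by auto
  have "cell v \<subseteq> S1" "cell w \<subseteq> S2"
    using \<open>v \<in> A\<close> \<open>w \<in> ?V - A\<close> unfolding S1_def S2_def by blast+
  then have ne: "S1 \<inter> F \<noteq> {}" "S2 \<inter> F \<noteq> {}"
    using cell_F[OF v] cell_F[OF w] by blast+
  have "closed S1" "closed S2"
    unfolding S1_def S2_def A_def
    using finite_gamma_vertices[OF finite_D] closed_cell by (auto intro!: closed_UN)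
  moreover have "F \<subseteq> S1 \<union> S2"
  proof
    fix x assume "x \<in> F"
    then obtain u y where "u \<in> ?V" "y \<in> F" "x = gsc_word_map N u y"
      by (rule attractor_cover_cells)
    then show "x \<in> S1 \<union> S2" unfolding S1_def S2_def by (cases "u \<in> A") auto
  qed
  ultimately have "S1 \<inter> S2 \<inter> F \<noteq> {}"
    using connected_closed_cover_meets[OF conn] ne by blast
  moreover have "S1 \<inter> S2 = {}"
  proof -
    have "cell u \<inter> cell u' = {}" if "u \<in> A" "u' \<in> ?V - A" for u u'
      using cells_disjoint_if_gcomponent[OF A that] .
    then show ?thesis unfolding S1_def S2_def by blast
  qed
  ultimately show False by blast
qed

section \<open>Points where two first-level pieces meet\<close>

definition contact_set :: "(int \<times> int) set \<Rightarrow> (real \<times> real) set" where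
  "contact_set E = {y \<in> F. \<exists>e\<in>E. y - of_int_pair e \<in> F}"

(* When u1 = u2 the contact point is the fixed point of gsc_map N u1, so the second alternative
   is a step of a contraction towards it. *)
lemma contact_set_step:
  assumes E0: "(0, 0) \<notin> E" and y: "y \<in> contact_set E"
    and address: "\<And>y d1 d2. y \<in> contact_set E \<Longrightarrow> d1 \<in> D \<Longrightarrow> d2 \<in> D \<Longrightarrow>
        y \<in> gsc_map N d1 ` gsc_map N d2 ` F \<Longrightarrow> d1 = u1 \<and> d2 = u2"
  shows "y = contact_point N u1 u2 \<or> (u1 = u2 \<and> (\<exists>y'\<in>contact_set E. y = gsc_map N u1 y'))"
proof -
  note mem_image = self_similar_mem_image[OF self_similar_attractor]
  obtain e where e: "e \<in> E" "y \<in> F" "y - of_int_pair e \<in> F"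
    using y unfolding contact_set_def by blast
  obtain d1 y' where d1: "d1 \<in> D" "y' \<in> F" "y = gsc_map N d1 y'"
    using mem_image[OF e(2)] by blast
  obtain d2 t where d2: "d2 \<in> D" "t \<in> F" "y' = gsc_map N d2 t"
    using mem_image[OF d1(2)] by blast
  have u: "d1 = u1" "d2 = u2"
    using address[OF y d1(1) d2(1)] d1(3) d2(2,3) by auto
  obtain b z where b: "b \<in> D" "z \<in> F" "y - of_int_pair e = gsc_map N b z"
    using mem_image[OF e(3)] by blast
  have digits': "u1 \<in> {0..<N} \<times> {0..<N}" "u2 \<in> {0..<N} \<times> {0..<N}" "b \<in> {0..<N} \<times> {0..<N}"
    using d1(1) d2(1) b(1) u digits by auto
  have tz: "t \<in> unit_square" "z \<in> unit_square"
    using d2(2) b(2) attractor_unit_square by auto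
  have e0: "e \<noteq> (0, 0)"
    using e(1) E0 by blast
  have shift: "gsc_map N u1 (gsc_map N u2 t) - of_int_pair e = gsc_map N b z"
    using b(3) d1(3) d2(3) u by simp
  obtain e' where e': "gsc_map N u2 t - z = of_int_pair e'"
    "e' \<noteq> e \<Longrightarrow> gsc_map N u1 (gsc_map N u2 t) = contact_point N u1 u2"
    using contact_point_shift[OF N_ge_2 digits' tz e0 shift] by blast
  note e' = e'[folded d2(3)[unfolded u] d1(3)[unfolded u]]
  show ?thesis
  proof (cases "e' = e")
    case True
    with e'(1) have "y' - of_int_pair e = y' - (y' - z)"
      by simp
    then have "y' - of_int_pair e = z"
      by simp
    with d1(2) b(2) e(1) have y': "y' \<in> contact_set E"
      unfolding contact_set_def by auto
    obtain d t' where "d \<in> D" "t' \<in> F" "t = gsc_map N d t'"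
      using mem_image[OF d2(2)] by blast
    with d2(3) u have "y' \<in> gsc_map N u2 ` gsc_map N d ` F" by blast
    then have "u2 = u1"
      using address[OF y'] d2(1) u \<open>d \<in> D\<close> by blast
    with y' d1(3) u show ?thesis by blast
  qed (use e' in blast)
qed

lemma contact_set_dist_le:
  assumes E0: "(0, 0) \<notin> E"
    and address: "\<And>y d1 d2. y \<in> contact_set E \<Longrightarrow> d1 \<in> D \<Longrightarrow> d2 \<in> D \<Longrightarrow>
        y \<in> gsc_map N d1 ` gsc_map N d2 ` F \<Longrightarrow> d1 = u1 \<and> d2 = u2"
    and p: "contact_point N u1 u2 \<in> unit_square" and x: "x \<in> contact_set E"
  shows "dist x (contact_point N u1 u2) \<le> 2 / real N ^ n"
  using x
proof (induction n arbitrary: x)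
  case 0
  then show ?case
    using dist_unit_square_le[OF _ p] attractor_unit_square unfolding contact_set_def by auto
next
  case (Suc n)
  let ?p = "contact_point N u1 u2"
  from contact_set_step[OF E0 Suc.prems address] show ?case
  proof
    assume "u1 = u2 \<and> (\<exists>x'\<in>contact_set E. x = gsc_map N u1 x')"
    then obtain x' where x': "x' \<in> contact_set E" "x = gsc_map N u1 x'" and "?p = gsc_fix N u1"
      using contact_point_same by blast
    then have "dist x ?p = dist x' ?p / real N"
      using dist_gsc_map[OF N_pos] gsc_map_fix[OF N_ge_2] by metis
    also have "\<dots> \<le> 2 / real N ^ n / real N"
      using Suc.IH[OF x'(1)] N_pos by (intro divide_right_mono) auto
    finally show ?thesis by (simp add: field_simps)
  qed auto
qed

lemma contact_set_eq_contact_point: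
  assumes E0: "(0, 0) \<notin> E" and y: "y \<in> contact_set E"
    and address: "\<And>y d1 d2. y \<in> contact_set E \<Longrightarrow> d1 \<in> D \<Longrightarrow> d2 \<in> D \<Longrightarrow>
        y \<in> gsc_map N d1 ` gsc_map N d2 ` F \<Longrightarrow> d1 = u1 \<and> d2 = u2"
  shows "y = contact_point N u1 u2"
proof -
  let ?p = "contact_point N u1 u2"
  obtain d1 y' where "d1 \<in> D" "y' \<in> F" "y = gsc_map N d1 y'"
    using y self_similar_mem_image[OF self_similar_attractor] unfolding contact_set_def by blast
  moreover obtain d2 t where "d2 \<in> D" "t \<in> F" "y' = gsc_map N d2 t"
    using self_similar_mem_image[OF self_similar_attractor \<open>y' \<in> F\<close>] by blast
  ultimately have "u1 \<in> D"
    using address[OF y] by blast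
  then have "?p \<in> unit_square"
    using contact_point_unit_square[OF N_ge_2] digits by blast
  then have "\<not> 2 / real N ^ n < dist y ?p" for n
    using contact_set_dist_le[OF E0 address _ y] by (simp add: not_less)
  then show ?thesis
    using ex_div_power_less[of "dist y ?p" 2] by auto
qed

definition only_contact_cell :: "nat \<Rightarrow> nat \<times> nat \<Rightarrow> (nat \<times> nat) set \<Rightarrow> (nat \<times> nat) list \<Rightarrow> bool" where
  "only_contact_cell n a R u \<longleftrightarrow>
     (\<forall>\<omega>\<in>gamma_vertices D (Suc n). \<forall>j\<in>R. \<forall>w\<in>gamma_vertices D n.
        hd \<omega> = a \<longrightarrow> cell \<omega> \<inter> cell (j # w) \<noteq> {} \<longrightarrow> \<omega> = a # u)"

lemma only_contact_cellD:
  assumes "only_contact_cell n a R u" "\<omega> \<in> gamma_vertices D (Suc n)" "j \<in> R" "w \<in> gamma_vertices D n"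
    "hd \<omega> = a" "cell \<omega> \<inter> cell (j # w) \<noteq> {}"
  shows "\<omega> = a # u"
  using assms unfolding only_contact_cell_def by blast

lemma mem_contact_set_digit_shift_iff:
  "y \<in> contact_set (digit_shift a ` R) \<longleftrightarrow> y \<in> F \<and> (\<exists>j\<in>R. gsc_map N a y \<in> gsc_map N j ` F)"
  unfolding contact_set_def gsc_map_mem_image_iff_shift[OF N_pos] by blast

(* This is where k \<ge> 3 enters: the cell a d1 d2 w must exist at level k1 + 1. *)
lemma contact_set_address:
  assumes k1: "k1 \<ge> 2" and a: "a \<in> D" and only: "only_contact_cell k1 a R u"
    and y: "y \<in> contact_set (digit_shift a ` R)" and d: "d1 \<in> D" "d2 \<in> D"
    and yd: "y \<in> gsc_map N d1 ` gsc_map N d2 ` F"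
  shows "d1 = u ! 0 \<and> d2 = u ! 1"
proof -
  obtain t where t: "t \<in> F" "y = gsc_map N d1 (gsc_map N d2 t)"
    using yd by blast
  obtain w t' where w: "w \<in> gamma_vertices D (k1 - 2)" "t' \<in> F" "t = gsc_word_map N w t'"
    using attractor_cover_cells[OF t(1)] by blast
  obtain j z where j: "j \<in> R" "z \<in> F" "gsc_map N a y = gsc_map N j z"
    using y unfolding mem_contact_set_digit_shift_iff by blast
  obtain w' z' where w': "w' \<in> gamma_vertices D k1" "z' \<in> F" "z = gsc_word_map N w' z'"
    using attractor_cover_cells[OF j(2)] by blast
  have \<omega>: "a # d1 # d2 # w \<in> gamma_vertices D (Suc k1)"
    using a d w(1) k1 by (auto simp: gamma_vertices_def)
  have "gsc_map N a y = gsc_word_map N (a # d1 # d2 # w) t'"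
    and "gsc_map N a y = gsc_word_map N (j # w') z'"
    using t(2) w(3) j(3) w'(3) by simp_all
  then have "cell (a # d1 # d2 # w) \<inter> cell (j # w') \<noteq> {}"
    using w(2) w'(2) by blast
  then have "a # d1 # d2 # w = a # u"
    by (rule only_contact_cellD[OF only \<omega> j(1) w'(1) list.sel(1)])
  then show ?thesis by auto
qed

lemma attractor_contact_subset_singleton:
  assumes k1: "k1 \<ge> 2" and a: "a \<in> D" and u: "u \<in> gamma_vertices D k1" and R: "R \<subseteq> D - {a}"
    and only: "only_contact_cell k1 a R u"
  shows "gsc_map N a ` F \<inter> (\<Union>j\<in>R. gsc_map N j ` F) \<subseteq> {gsc_map N a (contact_point N (u ! 0) (u ! 1))}"
proof
  fix x assume "x \<in> gsc_map N a ` F \<inter> (\<Union>j\<in>R. gsc_map N j ` F)"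
  then obtain y where y: "y \<in> F" "x = gsc_map N a y" "\<exists>j\<in>R. x \<in> gsc_map N j ` F"
    by blast
  have "(0, 0) \<notin> digit_shift a ` R"
  proof
    assume "(0, 0) \<in> digit_shift a ` R"
    then obtain j where "j \<in> R" "digit_shift a j = (0, 0)"
      by (metis imageE)
    with R show False
      unfolding digit_shift_eq_0_iff by blast
  qed
  moreover have "y \<in> contact_set (digit_shift a ` R)"
    unfolding mem_contact_set_digit_shift_iff using y by simp
  ultimately have "y = contact_point N (u ! 0) (u ! 1)"
    by (rule contact_set_eq_contact_point[OF _ _ contact_set_address[OF k1 a only]])
  with y(2) show "x \<in> {gsc_map N a (contact_point N (u ! 0) (u ! 1))}" by simp
qed

section \<open>Fragility\<close>

lemma fragile_if_contact_subset_singleton: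
  assumes conn: "connected F" and card: "1 < card D" and b: "b \<in> D"
    and contact: "gsc_map N b ` F \<inter> (\<Union>j\<in>D - {b}. gsc_map N j ` F) \<subseteq> {p}"
  shows "fragile N D"
proof -
  let ?A = "gsc_map N b ` F" and ?B = "\<Union>j\<in>D - {b}. gsc_map N j ` F"
  have "\<not> D \<subseteq> {b}"
    using card card_mono[of "{b}" D] by auto
  then obtain j0 where j0: "j0 \<in> D - {b}"
    by blast
  have closed_image: "closed (gsc_map N i ` F)" for i
    by (intro compact_imp_closed compact_continuous_image continuous_on_gsc_map compact_attractor)
  have "closed ?A" "closed ?B"
    using finite_D closed_image by auto
  moreover have "F \<subseteq> ?A \<union> ?B"
  proof
    fix x assume "x \<in> F"
    then obtain i z where "i \<in> D" "z \<in> F" "x = gsc_map N i z"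
      by (rule self_similar_mem_image[OF self_similar_attractor])
    then show "x \<in> ?A \<union> ?B" by (cases "i = b") auto
  qed
  moreover have "?A \<inter> F \<noteq> {}" "?B \<inter> F \<noteq> {}"
  proof -
    obtain y where y: "y \<in> F"
      using attractor_ne by blast
    have "gsc_map N i y \<in> F" if "i \<in> D" for i
      using self_similar_image_subset[OF self_similar_attractor that] y by blast
    then have "gsc_map N b y \<in> ?A \<inter> F" "gsc_map N j0 y \<in> ?B \<inter> F"
      using b j0 y by auto
    then show "?A \<inter> F \<noteq> {}" "?B \<inter> F \<noteq> {}"
      by blast+
  qed
  ultimately have "?A \<inter> ?B \<inter> F \<noteq> {}"
    by (intro connected_closed_cover_meets[OF conn])
  with contact have "?A \<inter> ?B = {p}" by blast
  with b j0 show ?thesis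
    unfolding fragile_def by (intro exI[of _ "{b}"] exI[of _ "D - {b}"]) auto
qed

lemma gcomponent_contains_block:
  assumes conn: "connected F"
    and C: "C \<in> gcomponents (gamma_vertices D (Suc k1) - {i0 # u}) (gamma_edge N D)"
    and j: "j \<noteq> i0" "j # w \<in> C"
  shows "Cons j ` gamma_vertices D k1 \<subseteq> C"
proof
  fix x assume "x \<in> Cons j ` gamma_vertices D k1"
  then obtain w' where w': "w' \<in> gamma_vertices D k1" "x = j # w'" by blast
  have "j \<in> D" "w \<in> gamma_vertices D k1"
    using gcomponent_subset[OF C] j(2) by auto
  moreover have "greach (gamma_vertices D k1) (gamma_edge N D) w w'"
    using greach_gamma_if_connected[OF conn \<open>w \<in> _\<close> w'(1)] .
  ultimately have "greach (gamma_vertices D (Suc k1) - {i0 # u}) (gamma_edge N D) (j # w) (j # w')"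
    using j(1) by (auto elim!: greach_map intro: gamma_edge_Cons)
  with C j(2) show "x \<in> C"
    unfolding w'(2) by (rule gcomponent_greach_closed)
qed

lemma gcomponent_eq_block:
  assumes conn: "connected F"
    and C: "C \<in> gcomponents (gamma_vertices D (Suc k1) - {i0 # u}) (gamma_edge N D)"
    and j: "j \<noteq> i0" "j # w \<in> C" and card_C: "card C \<le> card D ^ k1"
  shows "C = Cons j ` gamma_vertices D k1"
proof -
  have block: "Cons j ` gamma_vertices D k1 \<subseteq> C"
    using gcomponent_contains_block[OF conn C j] .
  have "finite C"
    using gcomponent_subset[OF C] finite_gamma_vertices[OF finite_D] finite_subset by blast
  moreover have "card (Cons j ` gamma_vertices D k1) = card C"
    using card_mono[OF \<open>finite C\<close> block] card_C card_Cons_image_gamma_vertices[OF finite_D]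
    by simp
  ultimately show ?thesis
    using card_subset_eq[OF _ block] by simp
qed

lemma gcomponent_shape:
  assumes conn: "connected F" and u: "u \<in> gamma_vertices D k1"
    and C: "C \<in> gcomponents (gamma_vertices D (Suc k1) - {i0 # u}) (gamma_edge N D)"
    and card_C: "card C = card D ^ k1 - 1 \<or> card C = card D ^ k1"
  shows "C = Cons i0 ` gamma_vertices D k1 - {i0 # u} \<or> (\<exists>b\<in>D - {i0}. C = Cons b ` gamma_vertices D k1)"
proof (cases "\<exists>j w. j \<noteq> i0 \<and> j # w \<in> C")
  case True
  then obtain j w where j: "j \<noteq> i0" "j # w \<in> C" by blast
  then have "j \<in> D"
    using gcomponent_subset[OF C] by auto
  moreover have "C = Cons j ` gamma_vertices D k1"
    using gcomponent_eq_block[OF conn C j] card_C by linarith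
  ultimately show ?thesis using j(1) by blast
next
  case False
  let ?P = "Cons i0 ` gamma_vertices D k1 - {i0 # u}"
  have fin_P: "finite ?P"
    using finite_gamma_vertices[OF finite_D] by simp
  have "C \<subseteq> ?P"
  proof
    fix x assume x: "x \<in> C"
    then have "x \<in> gamma_vertices D (Suc k1) - {i0 # u}"
      using gcomponent_subset[OF C] by blast
    then obtain j w where "x = j # w" "w \<in> gamma_vertices D k1"
      by (auto simp: gamma_vertices_Suc)
    with False x show "x \<in> ?P"
      using \<open>x \<in> _ - {i0 # u}\<close> by blast
  qed
  moreover have "card ?P = card D ^ k1 - 1"
    using u card_Cons_image_gamma_vertices[OF finite_D] by (simp add: card_Diff_singleton)
  ultimately have "C = ?P"
    using card_C card_mono[OF fin_P] card_subset_eq[OF fin_P] by (metis diff_le_self le_antisym)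
  then show ?thesis ..
qed

lemma fragile_if_gcomponent_punctured_block:
  assumes conn: "connected F" and card: "1 < card D" and k1: "k1 \<ge> 2"
    and i0: "i0 \<in> D" and u: "u \<in> gamma_vertices D k1"
    and C: "C \<in> gcomponents (gamma_vertices D (Suc k1) - {i0 # u}) (gamma_edge N D)"
    and C_eq: "C = Cons i0 ` gamma_vertices D k1 - {i0 # u}"
  shows "fragile N D"
proof -
  have "only_contact_cell k1 i0 (D - {i0}) u"
    unfolding only_contact_cell_def
  proof (intro ballI impI, rule ccontr)
    fix \<omega> j w
    assume \<omega>: "\<omega> \<in> gamma_vertices D (Suc k1)" "hd \<omega> = i0" and j: "j \<in> D - {i0}"
      and w: "w \<in> gamma_vertices D k1" and meet: "cell \<omega> \<inter> cell (j # w) \<noteq> {}"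
    assume "\<omega> \<noteq> i0 # u"
    with \<omega> have "\<omega> \<in> C"
      unfolding C_eq by (cases \<omega>) (auto simp: gamma_vertices_def)
    moreover have "j # w \<in> gamma_vertices D (Suc k1) - {i0 # u} - C"
      using j w unfolding C_eq by auto
    ultimately show False
      using cells_disjoint_if_gcomponent[OF C] meet by blast
  qed
  then have "gsc_map N i0 ` F \<inter> (\<Union>j\<in>D - {i0}. gsc_map N j ` F)
      \<subseteq> {gsc_map N i0 (contact_point N (u ! 0) (u ! 1))}"
    by (intro attractor_contact_subset_singleton[OF k1 i0 u]) auto
  then show ?thesis
    by (rule fragile_if_contact_subset_singleton[OF conn card i0])
qed

lemma gcomponent_block_contact_subset:
  assumes C: "C \<in> gcomponents (gamma_vertices D (Suc k1) - {i0 # u}) (gamma_edge N D)"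
    and C_eq: "C = Cons b ` gamma_vertices D k1"
  shows "gsc_map N b ` F \<inter> (\<Union>j\<in>D - {b}. gsc_map N j ` F) \<subseteq> gsc_map N i0 ` F \<inter> gsc_map N b ` F"
proof
  fix x assume "x \<in> gsc_map N b ` F \<inter> (\<Union>j\<in>D - {b}. gsc_map N j ` F)"
  then obtain y j z where y: "y \<in> F" and j: "j \<in> D" "j \<noteq> b" and z: "z \<in> F"
    and x: "x = gsc_map N b y" and eq: "gsc_map N b y = gsc_map N j z"
    by blast
  obtain w1 y1 where w1: "w1 \<in> gamma_vertices D k1" "y1 \<in> F" "y = gsc_word_map N w1 y1"
    using attractor_cover_cells[OF y] by blast
  obtain w2 z2 where w2: "w2 \<in> gamma_vertices D k1" "z2 \<in> F" "z = gsc_word_map N w2 z2"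
    using attractor_cover_cells[OF z] by blast
  have "gsc_map N b y = gsc_word_map N (b # w1) y1" "gsc_map N b y = gsc_word_map N (j # w2) z2"
    using eq w1(3) w2(3) by simp_all
  then have "gsc_map N b y \<in> cell (b # w1) \<inter> cell (j # w2)"
    using w1(2) w2(2) by blast
  moreover have "b # w1 \<in> C"
    using w1(1) unfolding C_eq by blast
  moreover have "j # w2 \<in> gamma_vertices D (Suc k1) - C"
    using j w2(1) unfolding C_eq by auto
  ultimately have "j # w2 = i0 # u"
    using cells_disjoint_if_gcomponent[OF C] by blast
  then have "x = gsc_map N i0 z"
    using x eq by simp
  then show "x \<in> gsc_map N i0 ` F \<inter> gsc_map N b ` F"
    using x y z by blast
qed

lemma fragile_if_gcomponent_block:
  assumes conn: "connected F" and card: "1 < card D" and k1: "k1 \<ge> 2"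
    and i0: "i0 \<in> D" and u: "u \<in> gamma_vertices D k1"
    and C: "C \<in> gcomponents (gamma_vertices D (Suc k1) - {i0 # u}) (gamma_edge N D)"
    and b: "b \<in> D - {i0}" and C_eq: "C = Cons b ` gamma_vertices D k1"
  shows "fragile N D"
proof -
  let ?V = "gamma_vertices D (Suc k1)" and ?V1 = "gamma_vertices D k1"
  have "only_contact_cell k1 i0 {b} u"
    unfolding only_contact_cell_def
  proof (intro ballI impI, rule ccontr)
    fix \<omega> j w
    assume \<omega>: "\<omega> \<in> ?V" "hd \<omega> = i0" and j: "j \<in> {b}"
      and w: "w \<in> ?V1" and meet: "cell \<omega> \<inter> cell (j # w) \<noteq> {}"
    assume "\<omega> \<noteq> i0 # u"
    with \<omega> b have "\<omega> \<in> ?V - {i0 # u} - C"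
      unfolding C_eq by auto
    moreover have "j # w \<in> C"
      using j w unfolding C_eq by blast
    ultimately show False
      using cells_disjoint_if_gcomponent[OF C] meet by blast
  qed
  then have contact_i0: "gsc_map N i0 ` F \<inter> gsc_map N b ` F
      \<subseteq> {gsc_map N i0 (contact_point N (u ! 0) (u ! 1))}"
    using attractor_contact_subset_singleton[OF k1 i0 u, of "{b}"] b by auto
  have "gsc_map N b ` F \<inter> (\<Union>j\<in>D - {b}. gsc_map N j ` F) \<subseteq> gsc_map N i0 ` F \<inter> gsc_map N b ` F"
    by (rule gcomponent_block_contact_subset[OF C C_eq])
  then have "gsc_map N b ` F \<inter> (\<Union>j\<in>D - {b}. gsc_map N j ` F)
      \<subseteq> {gsc_map N i0 (contact_point N (u ! 0) (u ! 1))}"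
    using contact_i0 by (rule subset_trans)
  with b show ?thesis
    using fragile_if_contact_subset_singleton[OF conn card] by blast
qed

end

theorem mainTheorem15:
  fixes N :: nat and D :: "(nat \<times> nat) set" and k :: nat
  assumes "N \<ge> 2"
    and "D \<subseteq> {0..<N} \<times> {0..<N}"
    and "1 < card D" and "card D < N ^ 2"
    and "connected (gsc_attractor N D)"
    and "k \<ge> 3"
    and "chi (gamma_vertices D k) (gamma_edge N D) = card D ^ (k - 1) - 1 \<or>
         chi (gamma_vertices D k) (gamma_edge N D) = card D ^ (k - 1)"
  shows "fragile N D"
proof -
  interpret gsc_carpet N D
    using assms(1-3) by unfold_locales auto
  obtain k1 where k: "k = Suc k1" and k1: "k1 \<ge> 2"
    using assms(6) by (cases k) auto
  let ?V = "gamma_vertices D (Suc k1)"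
  have "card D \<le> card D ^ k1"
    using assms(3) k1 by (simp add: self_le_power)
  then have "chi ?V (gamma_edge N D) \<noteq> 0"
    using assms(3,7) unfolding k by auto
  then obtain v C where v: "v \<in> ?V" and C: "C \<in> gcomponents (?V - {v}) (gamma_edge N D)"
    and card_C: "card C = chi ?V (gamma_edge N D)"
    using obtain_gcomponent_card_chi[OF finite_gamma_vertices[OF finite_D]] by blast
  then obtain i0 u where v_eq: "v = i0 # u" and i0: "i0 \<in> D" and u: "u \<in> gamma_vertices D k1"
    by (cases v) (auto simp: gamma_vertices_def)
  from gcomponent_shape[OF assms(5) u C[unfolded v_eq]] card_C assms(7)
  consider "C = Cons i0 ` gamma_vertices D k1 - {i0 # u}"
    | b where "b \<in> D - {i0}" "C = Cons b ` gamma_vertices D k1"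
    unfolding k by auto
  then show ?thesis
    using fragile_if_gcomponent_punctured_block[OF assms(5,3) k1 i0 u C[unfolded v_eq]]
      fragile_if_gcomponent_block[OF assms(5,3) k1 i0 u C[unfolded v_eq]]
    by cases blast+
qed

end
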